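(* Let $c\ge2$ and let $\Gamma=(V,E)$ be a $c$-uniform unoriented hypergraph with $E\ne\varnothing$ and no isolated vertices, with smallest normalized Laplacian eigenvalue $\lambda_1$ and strong coloring number $\chi$. If $\chi=\dfrac{c-\lambda_1}{1-\lambda_1}$, then for every proper strong $\chi$-coloring with color classes $V_1,\dots,V_\chi$, for all $v\in V$ and all $1\le i\le\chi$, \[ \bigl|\{e\in E: v\in e,\ e\cap V_i\neq\varnothing\}\bigr|=\begin{cases}\dfrac{(c-1)\deg v}{\chi-1}, & v\notin V_i,\\[2mm] \deg v, & v\in V_i.\end{cases} \]
   Context: A hypergraph has finite vertex set $V$ and edge set $E\subseteq\mathcal P(V)$; it is $c$-uniform if $|e|=c$ for all $e$, and unoriented means all incidences have orientation $+1$. $\deg v=|\{e\in E: v\in e\}|\ge1$, $D=\mathrm{diag}(\deg v)$, adjacency $A_{v,v}=0$ and $A_{v,w}=-|\{e\in E: v,w\in e\}|$ for $v\ne w$, normalized Laplacian $L=\mathrm{Id}-D^{-1}A$ with eigenvalues $\lambda_1\le\dots\le\lambda_N$. A proper strong $k$-coloring is a map $V\to\{1,\dots,k\}$ such that any two distinct vertices in a common edge receive different colors; $\chi$ is the least such $k$. *)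

theory Defs
  imports Complex_Main
begin

definition hypergraph :: "'a set \<Rightarrow> 'a set set \<Rightarrow> bool" where
  "hypergraph V E \<longleftrightarrow> finite V \<and> E \<subseteq> Pow V"

definition uniform :: "nat \<Rightarrow> 'a set set \<Rightarrow> bool" where
  "uniform c E \<longleftrightarrow> (\<forall>e\<in>E. card e = c)"

definition hdeg :: "'a set set \<Rightarrow> 'a \<Rightarrow> nat" where
  "hdeg E v = card {e\<in>E. v \<in> e}"

definition hadj :: "'a set set \<Rightarrow> 'a \<Rightarrow> 'a \<Rightarrow> real" where
  "hadj E v w = (if v = w then 0 else - real (card {e\<in>E. v \<in> e \<and> w \<in> e}))"

definition laplacian :: "'a set \<Rightarrow> 'a set set \<Rightarrow> ('a \<Rightarrow> real) \<Rightarrow> 'a \<Rightarrow> real" where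
  "laplacian V E f v = f v - (\<Sum>w\<in>V. hadj E v w * f w) / real (hdeg E v)"

definition is_eigenvalue :: "'a set \<Rightarrow> 'a set set \<Rightarrow> real \<Rightarrow> bool" where
  "is_eigenvalue V E l \<longleftrightarrow>
     (\<exists>f. (\<exists>v\<in>V. f v \<noteq> 0) \<and> (\<forall>v\<in>V. laplacian V E f v = l * f v))"

text \<open>Smallest eigenvalue \<lambda>_1 (L is similar to a symmetric matrix, so all eigenvalues are real).\<close>
definition lambda_min :: "'a set \<Rightarrow> 'a set set \<Rightarrow> real" where
  "lambda_min V E = Min {l. is_eigenvalue V E l}"

definition proper_strong_coloring :: "'a set \<Rightarrow> 'a set set \<Rightarrow> nat \<Rightarrow> ('a \<Rightarrow> nat) \<Rightarrow> bool" where
  "proper_strong_coloring V E k col \<longleftrightarrow>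
     (\<forall>v\<in>V. col v \<in> {1..k}) \<and>
     (\<forall>e\<in>E. \<forall>v\<in>e. \<forall>w\<in>e. v \<noteq> w \<longrightarrow> col v \<noteq> col w)"

definition strong_chromatic :: "'a set \<Rightarrow> 'a set set \<Rightarrow> nat" where
  "strong_chromatic V E = (LEAST k. \<exists>col. proper_strong_coloring V E k col)"

end

theory Submission
  imports Defs "HOL-Analysis.Analysis" "HOL-Library.Function_Algebras"
begin

(* Writing f(e) for the sum of f over the edge e, one has deg v * (L f)(v) = sum of f(e) over the
   edges e containing v, so L is self-adjoint for the degree-weighted inner product and its
   Rayleigh quotient is R(f) = sum_e f(e)^2 / sum_v deg v * f(v)^2. Hence lambda_1 is the minimum
   of R, and every minimiser of R satisfies the eigenvalue equation at each vertex.
   Given a proper strong k-colouring, the test functions f_j = k * 1_{V_j} - 1 have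
   f_j(e) = k * [e meets V_j] - c, because an edge meets each colour class at most once and
   meets exactly c of them. Summing over j, the numerators of R(f_j) add up to c k (k - c) |E| and
   the denominators to c k (k - 1) |E|. If k = (c - lambda_1)/(1 - lambda_1), i.e.
   lambda_1 (k - 1) = k - c, every f_j must therefore be a minimiser, and the eigenvalue
   equation for f_i at v is a linear equation for the number of edges at v meeting V_i. *)

lemma hypergraph_finite:
  assumes "hypergraph V E"
  shows "finite E" and "e \<in> E \<Longrightarrow> finite e"
  using assms unfolding hypergraph_def by (auto intro: finite_subset)

lemma sum_vertex_edge_swap:
  assumes "hypergraph V E"
  shows "(\<Sum>v\<in>V. \<Sum>e\<in>{e\<in>E. v \<in> e}. F v e) = (\<Sum>e\<in>E. \<Sum>v\<in>e. F v e)"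
proof -
  have fin: "finite V" and EV: "E \<subseteq> Pow V" using assms unfolding hypergraph_def by auto
  have "(\<Sum>v\<in>V. \<Sum>e\<in>{e\<in>E. v \<in> e}. F v e) = (\<Sum>e\<in>E. \<Sum>v\<in>{v\<in>V. v \<in> e}. F v e)"
    using fin hypergraph_finite(1)[OF assms] by (simp add: sum.inter_filter sum.swap[of _ V])
  also have "\<dots> = (\<Sum>e\<in>E. \<Sum>v\<in>e. F v e)"
    using EV by (intro sum.cong refl) auto
  finally show ?thesis .
qed

definition edge_sum :: "('a \<Rightarrow> real) \<Rightarrow> 'a set \<Rightarrow> real" where
  "edge_sum f e = (\<Sum>w\<in>e. f w)"

definition edge_inner :: "'a set set \<Rightarrow> ('a \<Rightarrow> real) \<Rightarrow> ('a \<Rightarrow> real) \<Rightarrow> real" where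
  "edge_inner E f g = (\<Sum>e\<in>E. edge_sum f e * edge_sum g e)"

definition deg_inner :: "'a set \<Rightarrow> 'a set set \<Rightarrow> ('a \<Rightarrow> real) \<Rightarrow> ('a \<Rightarrow> real) \<Rightarrow> real" where
  "deg_inner V E f g = (\<Sum>v\<in>V. real (hdeg E v) * f v * g v)"

lemma laplacian_edge_sum:
  assumes hg: "hypergraph V E" and v: "v \<in> V" and deg: "hdeg E v \<ge> 1"
  shows "real (hdeg E v) * laplacian V E f v = (\<Sum>e\<in>{e\<in>E. v \<in> e}. edge_sum f e)"
proof -
  have fin: "finite V" using hg unfolding hypergraph_def by simp
  define N where "N w = real (card {e\<in>E. v \<in> e \<and> w \<in> e})" for w
  have "(\<Sum>w\<in>V. hadj E v w * f w) = (\<Sum>w\<in>V - {v}. hadj E v w * f w)"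
    using fin v by (simp add: sum.remove hadj_def)
  also have "\<dots> = - (\<Sum>w\<in>V - {v}. N w * f w)"
    unfolding sum_negf[symmetric] by (intro sum.cong refl) (auto simp: hadj_def N_def)
  finally have adj: "(\<Sum>w\<in>V. hadj E v w * f w) = - (\<Sum>w\<in>V - {v}. N w * f w)" .
  have "hypergraph V {e\<in>E. v \<in> e}" using hg unfolding hypergraph_def by auto
  from sum_vertex_edge_swap[OF this, of "\<lambda>w e. f w"]
  have "(\<Sum>e\<in>{e\<in>E. v \<in> e}. edge_sum f e) = (\<Sum>w\<in>V. N w * f w)"
    unfolding edge_sum_def N_def by (simp add: conj_ac)
  also have "\<dots> = real (hdeg E v) * f v - (\<Sum>w\<in>V. hadj E v w * f w)"
    using fin v unfolding adj by (simp add: sum.remove N_def hdeg_def)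
  finally show ?thesis
    using deg unfolding laplacian_def by (simp add: right_diff_distrib)
qed

lemma deg_inner_laplacian:
  assumes hg: "hypergraph V E" and deg: "\<forall>v\<in>V. hdeg E v \<ge> 1"
  shows "deg_inner V E (laplacian V E f) g = edge_inner E f g"
proof -
  have "deg_inner V E (laplacian V E f) g = (\<Sum>v\<in>V. \<Sum>e\<in>{e\<in>E. v \<in> e}. edge_sum f e * g v)"
    unfolding deg_inner_def using hg deg by (intro sum.cong) (auto simp: laplacian_edge_sum sum_distrib_right)
  also have "\<dots> = edge_inner E f g"
    unfolding edge_inner_def using hg by (simp add: sum_vertex_edge_swap edge_sum_def sum_distrib_left)
  finally show ?thesis .
qed

lemma edge_inner_add_scaled:
  "edge_inner E (\<lambda>x. f x + t * h x) (\<lambda>x. f x + t * h x)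
     = edge_inner E f f + 2 * t * edge_inner E f h + t\<^sup>2 * edge_inner E h h"
  unfolding edge_inner_def edge_sum_def
  by (simp add: sum.distrib sum_distrib_left power2_eq_square algebra_simps)

lemma deg_inner_add_scaled:
  "deg_inner V E (\<lambda>x. f x + t * h x) (\<lambda>x. f x + t * h x)
     = deg_inner V E f f + 2 * t * deg_inner V E f h + t\<^sup>2 * deg_inner V E h h"
  unfolding deg_inner_def
  by (simp add: sum.distrib sum_distrib_left power2_eq_square algebra_simps)

lemma quadratic_nonneg_imp_linear_coeff_zero:
  fixes b a :: real
  assumes "\<And>t. 0 \<le> 2 * t * b + t\<^sup>2 * a"
  shows "b = 0"
proof -
  define s where "s = \<bar>a\<bar> + 1"
  have s: "s \<ge> 1" unfolding s_def by simp
  have "0 \<le> s\<^sup>2 * (2 * (- b / s) * b + (- b / s)\<^sup>2 * a)" using assms[of "- b / s"] by simp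
  also have "\<dots> = b\<^sup>2 * (a - 2 * s)"
    using s by (simp add: field_simps power2_eq_square)
  finally have "0 \<le> b\<^sup>2 * (a - 2 * s)" .
  moreover have "a - 2 * s < 0" unfolding s_def by (cases "a \<ge> 0") auto
  ultimately show ?thesis by (smt (verit) mult_pos_neg zero_less_power2)
qed

lemma rayleigh_minimizer_stationary:
  assumes "\<And>f. edge_inner E f f \<ge> l * deg_inner V E f f"
    and "edge_inner E g g = l * deg_inner V E g g"
  shows "edge_inner E g h = l * deg_inner V E g h"
proof -
  have "0 \<le> 2 * t * (edge_inner E g h - l * deg_inner V E g h)
            + t\<^sup>2 * (edge_inner E h h - l * deg_inner V E h h)" for t
    using assms(1)[of "\<lambda>x. g x + t * h x"] assms(2)
    by (simp add: edge_inner_add_scaled deg_inner_add_scaled algebra_simps)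
  then have "edge_inner E g h - l * deg_inner V E g h = 0"
    by (rule quadratic_nonneg_imp_linear_coeff_zero)
  then show ?thesis by simp
qed

lemma edge_inner_vertex_indicator:
  assumes "hypergraph V E"
  shows "edge_inner E g (\<lambda>x. if x = v then 1 else 0) = (\<Sum>e\<in>{e\<in>E. v \<in> e}. edge_sum g e)"
proof -
  have "edge_sum (\<lambda>x. if x = v then 1 else 0) e = (if v \<in> e then 1 else 0)" if "e \<in> E" for e
    using hypergraph_finite(2)[OF assms that] unfolding edge_sum_def by simp
  then have "edge_inner E g (\<lambda>x. if x = v then 1 else 0) = (\<Sum>e\<in>E. if v \<in> e then edge_sum g e else 0)"
    unfolding edge_inner_def by (intro sum.cong) auto
  also have "\<dots> = (\<Sum>e\<in>{e\<in>E. v \<in> e}. edge_sum g e)"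
    using hypergraph_finite(1)[OF assms] by (simp add: sum.inter_filter)
  finally show ?thesis .
qed

lemma deg_inner_vertex_indicator:
  assumes "hypergraph V E" "v \<in> V"
  shows "deg_inner V E g (\<lambda>x. if x = v then 1 else 0) = real (hdeg E v) * g v"
proof -
  have "deg_inner V E g (\<lambda>x. if x = v then 1 else 0) = (\<Sum>w\<in>V. if w = v then real (hdeg E w) * g w else 0)"
    unfolding deg_inner_def by (intro sum.cong) auto
  also have "\<dots> = real (hdeg E v) * g v"
    using assms unfolding hypergraph_def by simp
  finally show ?thesis .
qed

lemma rayleigh_minimizer_vertex_equation:
  assumes "hypergraph V E" "v \<in> V"
    and "\<And>f. edge_inner E f f \<ge> l * deg_inner V E f f"
    and "edge_inner E g g = l * deg_inner V E g g"
  shows "(\<Sum>e\<in>{e\<in>E. v \<in> e}. edge_sum g e) = l * real (hdeg E v) * g v"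
  using rayleigh_minimizer_stationary[OF assms(3,4), of "\<lambda>x. if x = v then 1 else 0"] assms(1,2)
  by (simp add: edge_inner_vertex_indicator deg_inner_vertex_indicator)

lemma eigenfunctions_deg_orthogonal:
  assumes hg: "hypergraph V E" and deg: "\<forall>v\<in>V. hdeg E v \<ge> 1"
    and f: "\<forall>v\<in>V. laplacian V E f v = l * f v"
    and g: "\<forall>v\<in>V. laplacian V E g v = m * g v"
    and "l \<noteq> m"
  shows "deg_inner V E f g = 0"
proof -
  have "l * deg_inner V E f g = deg_inner V E (laplacian V E f) g"
    unfolding deg_inner_def using f by (simp add: sum_distrib_left algebra_simps)
  also have "\<dots> = edge_inner E f g" by (rule deg_inner_laplacian[OF hg deg])
  also have "\<dots> = edge_inner E g f" unfolding edge_inner_def by (simp add: mult.commute)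
  also have "\<dots> = deg_inner V E (laplacian V E g) f" by (rule deg_inner_laplacian[OF hg deg, symmetric])
  also have "\<dots> = m * deg_inner V E f g"
    unfolding deg_inner_def using g by (simp add: sum_distrib_left algebra_simps)
  finally have "(l - m) * deg_inner V E f g = 0" by (simp add: algebra_simps)
  then show ?thesis using \<open>l \<noteq> m\<close> by simp
qed

lemma deg_inner_self_nonneg: "deg_inner V E f f \<ge> 0"
  unfolding deg_inner_def mult.assoc by (intro sum_nonneg) simp

lemma deg_inner_self_pos:
  assumes "finite V" "\<forall>v\<in>V. hdeg E v \<ge> 1" "v \<in> V" "f v \<noteq> 0"
  shows "deg_inner V E f f > 0"
proof -
  have "hdeg E v \<ge> 1" using assms by blast
  then have "0 < real (hdeg E v) * (f v * f v)"
    using \<open>f v \<noteq> 0\<close> by (auto simp: zero_less_mult_iff linorder_neq_iff)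
  also have "\<dots> \<le> deg_inner V E f f"
    unfolding deg_inner_def mult.assoc using assms by (intro member_le_sum) auto
  finally show ?thesis .
qed

lemma sum_fun_apply: "sum F T x = (\<Sum>t\<in>T. F t x)" for F :: "'b \<Rightarrow> 'a \<Rightarrow> real"
  by (induction T rule: infinite_finite_induct) auto

lemma vector_space_real_fun: "vector_space (\<lambda>r (f::'a \<Rightarrow> real) x. r * f x)"
  by unfold_locales (auto simp: fun_eq_iff algebra_simps)

text \<open>Such a family is linearly independent in a space of dimension card V.\<close>

lemma finite_deg_orthogonal_family:
  assumes fin: "finite V"
    and pos: "\<And>f. f \<in> F \<Longrightarrow> deg_inner V E f f > 0"
    and orth: "\<And>f g. f \<in> F \<Longrightarrow> g \<in> F \<Longrightarrow> f \<noteq> g \<Longrightarrow> deg_inner V E f g = 0"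
    and supp: "\<And>f x. f \<in> F \<Longrightarrow> x \<notin> V \<Longrightarrow> f x = 0"
  shows "finite F"
proof -
  interpret fun_space: vector_space "\<lambda>r (f::'a \<Rightarrow> real) x. r * f x" by (rule vector_space_real_fun)
  have "fun_space.independent F"
    unfolding fun_space.independent_explicit_finite_subsets
  proof (intro allI impI ballI)
    fix T u w
    assume T: "T \<subseteq> F" "finite T" and "(\<Sum>t\<in>T. (\<lambda>x. u t * t x)) = 0" and w: "w \<in> T"
    then have "0 = deg_inner V E (\<Sum>t\<in>T. (\<lambda>x. u t * t x)) w" unfolding deg_inner_def by simp
    also have "\<dots> = (\<Sum>t\<in>T. u t * deg_inner V E t w)"
      unfolding deg_inner_def sum_fun_apply
      by (simp add: sum_distrib_left sum_distrib_right algebra_simps sum.swap[of _ V])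
    also have "\<dots> = (\<Sum>t\<in>{w}. u t * deg_inner V E t w)"
      using T w orth by (intro sum.mono_neutral_right) auto
    finally show "u w = 0" using T w pos by force
  qed
  moreover have "F \<subseteq> fun_space.span ((\<lambda>v x. if x = v then 1 else 0) ` V)"
  proof
    fix f assume "f \<in> F"
    have "f = (\<Sum>v\<in>V. (\<lambda>x. f v * (if x = v then 1 else 0)))"
      unfolding fun_eq_iff sum_fun_apply using fin supp[OF \<open>f \<in> F\<close>]
      by (auto simp: if_distrib cong: if_cong)
    also have "\<dots> \<in> fun_space.span ((\<lambda>v x. if x = v then 1 else 0) ` V)"
      by (intro fun_space.span_sum fun_space.span_scale fun_space.span_base) auto
    finally show "f \<in> fun_space.span ((\<lambda>v x. if x = v then 1 else 0) ` V)" .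
  qed
  ultimately show ?thesis using fun_space.independent_span_bound fin by blast
qed

lemma finite_eigenvalues:
  assumes hg: "hypergraph V E" and deg: "\<forall>v\<in>V. hdeg E v \<ge> 1"
  shows "finite {l. is_eigenvalue V E l}"
proof -
  have fin: "finite V" using hg unfolding hypergraph_def by simp
  define S where "S = {l. is_eigenvalue V E l}"
  define eigen where "eigen l f \<longleftrightarrow> (\<exists>v\<in>V. f v \<noteq> 0) \<and> (\<forall>v\<in>V. laplacian V E f v = l * f v)
    \<and> (\<forall>x. x \<notin> V \<longrightarrow> f x = 0)" for l f
  have "\<forall>l\<in>S. \<exists>f. eigen l f"
  proof
    fix l assume "l \<in> S"
    then obtain f where f: "\<exists>v\<in>V. f v \<noteq> 0" "\<forall>v\<in>V. laplacian V E f v = l * f v"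
      unfolding S_def is_eigenvalue_def by blast
    have "laplacian V E (\<lambda>x. if x \<in> V then f x else 0) v = laplacian V E f v" if "v \<in> V" for v
      using that unfolding laplacian_def by simp
    then show "\<exists>f. eigen l f"
      using f unfolding eigen_def by (intro exI[of _ "\<lambda>x. if x \<in> V then f x else 0"]) auto
  qed
  then obtain \<phi> where \<phi>: "\<And>l. l \<in> S \<Longrightarrow> eigen l (\<phi> l)" by (meson bchoice)
  have pos: "deg_inner V E (\<phi> l) (\<phi> l) > 0" if "l \<in> S" for l
    using \<phi>[OF that] deg_inner_self_pos[OF fin deg] unfolding eigen_def by blast
  have orth: "deg_inner V E (\<phi> l) (\<phi> m) = 0" if "l \<in> S" "m \<in> S" "l \<noteq> m" for l m
    using eigenfunctions_deg_orthogonal[OF hg deg _ _ that(3)] \<phi>[OF that(1)] \<phi>[OF that(2)]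
    unfolding eigen_def by blast
  have "inj_on \<phi> S"
  proof (rule inj_onI)
    fix l m assume "l \<in> S" "m \<in> S" "\<phi> l = \<phi> m"
    then show "l = m" using pos[of l] orth[of l m] by (metis less_irrefl)
  qed
  moreover have "finite (\<phi> ` S)"
  proof (rule finite_deg_orthogonal_family[OF fin])
    show "\<And>f x. f \<in> \<phi> ` S \<Longrightarrow> x \<notin> V \<Longrightarrow> f x = 0" using \<phi> unfolding eigen_def by blast
  qed (use pos orth in auto)
  ultimately show ?thesis using finite_imageD unfolding S_def by blast
qed

lemma edge_inner_scale:
  "edge_inner E (\<lambda>x. a * f x) (\<lambda>x. a * f x) = a\<^sup>2 * edge_inner E f f"
  unfolding edge_inner_def edge_sum_def
  by (simp add: sum_distrib_left[symmetric] power2_eq_square algebra_simps)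

lemma deg_inner_scale:
  "deg_inner V E (\<lambda>x. a * f x) (\<lambda>x. a * f x) = a\<^sup>2 * deg_inner V E f f"
  unfolding deg_inner_def by (simp add: sum_distrib_left power2_eq_square algebra_simps)

lemma edge_inner_restrict:
  assumes "hypergraph V E"
  shows "edge_inner E (\<lambda>x. if x \<in> V then f x else 0) (\<lambda>x. if x \<in> V then f x else 0)
    = edge_inner E f f"
proof -
  have "edge_sum (\<lambda>x. if x \<in> V then f x else 0) e = edge_sum f e" if "e \<in> E" for e
    using assms that unfolding hypergraph_def edge_sum_def by (intro sum.cong) auto
  then show ?thesis unfolding edge_inner_def by simp
qed

lemma deg_inner_restrict:
  "deg_inner V E (\<lambda>x. if x \<in> V then f x else 0) (\<lambda>x. if x \<in> V then f x else 0) = deg_inner V E f f"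
  unfolding deg_inner_def by simp

definition deg_normalize :: "'a set \<Rightarrow> 'a set set \<Rightarrow> ('a \<Rightarrow> real) \<Rightarrow> 'a \<Rightarrow> real" where
  "deg_normalize V E f x = (if x \<in> V then f x / sqrt (deg_inner V E f f) else 0)"

lemma deg_normalize_scaled:
  "deg_normalize V E f = (\<lambda>x. if x \<in> V then 1 / sqrt (deg_inner V E f f) * f x else 0)"
  unfolding deg_normalize_def by auto

lemma inner_deg_normalize:
  assumes "hypergraph V E" "deg_inner V E f f > 0"
  shows "deg_inner V E (deg_normalize V E f) (deg_normalize V E f) = 1"
    and "edge_inner E (deg_normalize V E f) (deg_normalize V E f) = edge_inner E f f / deg_inner V E f f"
proof -
  define a where "a = 1 / sqrt (deg_inner V E f f)"
  have a2: "a\<^sup>2 = 1 / deg_inner V E f f" using assms(2) unfolding a_def by (simp add: power_divide)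
  have n: "deg_normalize V E f = (\<lambda>x. if x \<in> V then a * f x else 0)"
    unfolding deg_normalize_scaled a_def ..
  show "deg_inner V E (deg_normalize V E f) (deg_normalize V E f) = 1"
    using assms(2) unfolding n deg_inner_restrict deg_inner_scale a2 by simp
  show "edge_inner E (deg_normalize V E f) (deg_normalize V E f) = edge_inner E f f / deg_inner V E f f"
    unfolding n edge_inner_restrict[OF assms(1)] edge_inner_scale a2 by simp
qed

lemma abs_deg_normalize_le_1:
  assumes "hypergraph V E" "\<forall>v\<in>V. hdeg E v \<ge> 1" "deg_inner V E f f > 0"
  shows "\<bar>deg_normalize V E f x\<bar> \<le> 1"
proof (cases "x \<in> V")
  case True
  define a where "a = 1 / sqrt (deg_inner V E f f)"
  have "f x * f x \<le> real (hdeg E x) * f x * f x"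
    using assms True mult_right_mono[of 1 "real (hdeg E x)" "f x * f x"] by (simp add: mult.assoc)
  then have "a\<^sup>2 * (f x * f x) \<le> a\<^sup>2 * (real (hdeg E x) * f x * f x)"
    by (rule mult_left_mono) simp
  then have "(a * f x)\<^sup>2 \<le> a\<^sup>2 * (real (hdeg E x) * f x * f x)"
    by (simp add: power_mult_distrib power2_eq_square mult_ac)
  also have "\<dots> \<le> a\<^sup>2 * deg_inner V E f f"
    unfolding deg_inner_def using assms True
    by (intro mult_left_mono member_le_sum) (auto simp: mult.assoc hypergraph_def)
  also have "\<dots> = 1" using assms unfolding a_def by (simp add: power_divide)
  finally show ?thesis using True unfolding deg_normalize_scaled a_def by (simp add: abs_square_le_1)
qed (simp add: deg_normalize_def)

lemma rayleigh_quotient_min_attained: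
  assumes hg: "hypergraph V E" and deg: "\<forall>v\<in>V. hdeg E v \<ge> 1" and "V \<noteq> {}"
  obtains g where "deg_inner V E g g = 1"
    and "\<And>f. edge_inner E f f \<ge> edge_inner E g g * deg_inner V E f f"
proof -
  have fin: "finite V" using hg unfolding hypergraph_def by simp
  note coordinate = continuous_on_product_then_coordinatewise[OF continuous_on_id]
  define B where "B = PiE UNIV (\<lambda>x. if x \<in> V then {-1..1} else {0::real})"
  define K where "K = B \<inter> {f. deg_inner V E f f = 1}"
  have "compactin (product_topology (\<lambda>_. euclidean) UNIV) B"
    unfolding B_def compactin_PiE by auto
  then have "compact B" by (simp add: euclidean_product_topology)
  moreover have "closed {f. deg_inner V E f f = 1}"
    unfolding deg_inner_def by (intro closed_Collect_eq continuous_intros coordinate)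
  ultimately have "compact K" unfolding K_def by blast
  have normalize_in_K: "deg_normalize V E f \<in> K" if "deg_inner V E f f > 0" for f
  proof -
    have "deg_normalize V E f x \<in> (if x \<in> V then {-1..1} else {0})" for x
      using abs_deg_normalize_le_1[OF hg deg that, of x]
      by (auto simp: abs_le_iff deg_normalize_def split: if_splits)
    then show ?thesis using inner_deg_normalize(1)[OF hg that] unfolding K_def B_def by blast
  qed
  obtain v where "v \<in> V" using \<open>V \<noteq> {}\<close> by blast
  then have "deg_inner V E (\<lambda>x. if x = v then 1 else 0) (\<lambda>x. if x = v then 1 else 0) > 0"
    using deg_inner_self_pos[OF fin deg] by simp
  then have "K \<noteq> {}" using normalize_in_K by blast
  moreover have "continuous_on K (\<lambda>f. edge_inner E f f)"
    unfolding edge_inner_def edge_sum_def by (intro continuous_intros coordinate)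
  ultimately obtain g where "g \<in> K" and g_min: "\<And>f. f \<in> K \<Longrightarrow> edge_inner E g g \<le> edge_inner E f f"
    using continuous_attains_inf[OF \<open>compact K\<close>] by blast
  have "edge_inner E f f \<ge> edge_inner E g g * deg_inner V E f f" for f
  proof (cases "deg_inner V E f f > 0")
    case True
    have "edge_inner E g g \<le> edge_inner E f f / deg_inner V E f f"
      using g_min[OF normalize_in_K[OF True]] inner_deg_normalize(2)[OF hg True] by simp
    then show ?thesis using True by (simp add: field_simps)
  next
    case False
    then have "deg_inner V E f f = 0" using deg_inner_self_nonneg[of V E f] by simp
    then show ?thesis unfolding edge_inner_def by (simp add: sum_nonneg)
  qed
  then show thesis using that \<open>g \<in> K\<close> unfolding K_def by blast
qed

lemma exists_eigenvalue_rayleigh_lower_bound: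
  assumes hg: "hypergraph V E" and deg: "\<forall>v\<in>V. hdeg E v \<ge> 1" and "V \<noteq> {}"
  obtains \<mu> where "is_eigenvalue V E \<mu>" and "\<And>f. edge_inner E f f \<ge> \<mu> * deg_inner V E f f"
proof -
  obtain g where g1: "deg_inner V E g g = 1"
    and min: "\<And>f. edge_inner E f f \<ge> edge_inner E g g * deg_inner V E f f"
    using rayleigh_quotient_min_attained[OF assms] by blast
  define \<mu> where "\<mu> = edge_inner E g g"
  have bound: "\<And>f. edge_inner E f f \<ge> \<mu> * deg_inner V E f f" using min unfolding \<mu>_def .
  have "laplacian V E g v = \<mu> * g v" if "v \<in> V" for v
  proof -
    have "real (hdeg E v) * laplacian V E g v = real (hdeg E v) * (\<mu> * g v)"
      using laplacian_edge_sum[OF hg that] deg that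
        rayleigh_minimizer_vertex_equation[OF hg that bound, of g] g1 \<mu>_def by simp
    moreover have "hdeg E v \<noteq> 0" using deg that by fastforce
    ultimately show ?thesis by simp
  qed
  moreover have "\<exists>v\<in>V. g v \<noteq> 0"
  proof (rule ccontr)
    assume "\<not> (\<exists>v\<in>V. g v \<noteq> 0)"
    then have "deg_inner V E g g = 0" unfolding deg_inner_def by simp
    then show False using g1 by simp
  qed
  ultimately show thesis using that bound unfolding is_eigenvalue_def by blast
qed

lemma lambda_min_rayleigh_lower_bound:
  assumes "hypergraph V E" "\<forall>v\<in>V. hdeg E v \<ge> 1" "V \<noteq> {}"
  shows "edge_inner E f f \<ge> lambda_min V E * deg_inner V E f f"
proof -
  obtain \<mu> where \<mu>: "is_eigenvalue V E \<mu>" "\<And>f. edge_inner E f f \<ge> \<mu> * deg_inner V E f f"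
    using exists_eigenvalue_rayleigh_lower_bound[OF assms] by blast
  have "lambda_min V E \<le> \<mu>"
    unfolding lambda_min_def using finite_eigenvalues[OF assms(1,2)] \<mu>(1) by simp
  then have "lambda_min V E * deg_inner V E f f \<le> \<mu> * deg_inner V E f f"
    using deg_inner_self_nonneg by (rule mult_right_mono)
  with \<mu>(2) show ?thesis by (meson order_trans)
qed

definition colour_class_test :: "nat \<Rightarrow> ('a \<Rightarrow> nat) \<Rightarrow> nat \<Rightarrow> 'a \<Rightarrow> real" where
  "colour_class_test k col j x = (if col x = j then real k - 1 else - 1)"

lemma proper_strong_coloring_inj_on_edge:
  assumes "proper_strong_coloring V E k col" "e \<in> E"
  shows "inj_on col e"
  using assms unfolding proper_strong_coloring_def inj_on_def by blast

lemma proper_strong_coloring_edge_colours: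
  assumes "hypergraph V E" "uniform c E" "proper_strong_coloring V E k col" "e \<in> E"
  shows "col ` e \<subseteq> {1..k}" and "card (col ` e) = c"
proof -
  show "col ` e \<subseteq> {1..k}"
    using assms unfolding hypergraph_def proper_strong_coloring_def by blast
  show "card (col ` e) = c"
    using assms card_image[OF proper_strong_coloring_inj_on_edge[OF assms(3,4)]]
    unfolding uniform_def by simp
qed

lemma uniform_le_colours:
  assumes "hypergraph V E" "uniform c E" "proper_strong_coloring V E k col" "e \<in> E"
  shows "c \<le> k"
  using card_mono[OF _ proper_strong_coloring_edge_colours(1)[OF assms]]
    proper_strong_coloring_edge_colours(2)[OF assms] by simp

lemma edge_sum_colour_class_test:
  assumes hg: "hypergraph V E" and "uniform c E" and col: "proper_strong_coloring V E k col"
    and e: "e \<in> E"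
  shows "edge_sum (colour_class_test k col j) e = real k * of_bool (j \<in> col ` e) - real c"
proof -
  have "finite e" "card e = c"
    using assms hypergraph_finite(2) unfolding uniform_def by auto
  have "col ` {w\<in>e. col w = j} = col ` e \<inter> {j}" by auto
  moreover have "inj_on col {w\<in>e. col w = j}"
    using proper_strong_coloring_inj_on_edge[OF col e] by (rule inj_on_subset) auto
  ultimately have "card {w\<in>e. col w = j} = card (col ` e \<inter> {j})" by (metis card_image)
  also have "\<dots> = of_bool (j \<in> col ` e)" by auto
  finally have "card {w\<in>e. col w = j} = of_bool (j \<in> col ` e)" .
  moreover have "edge_sum (colour_class_test k col j) e = (\<Sum>w\<in>e. real k * of_bool (col w = j) - 1)"
    unfolding edge_sum_def colour_class_test_def by (intro sum.cong) auto
  ultimately show ?thesis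
    using \<open>finite e\<close> \<open>card e = c\<close> by (simp add: sum_subtractf sum_distrib_left[symmetric] Int_def)
qed

lemma sum_hdeg_uniform:
  assumes "hypergraph V E" "uniform c E"
  shows "(\<Sum>v\<in>V. real (hdeg E v)) = real c * real (card E)"
proof -
  have "(\<Sum>v\<in>V. real (hdeg E v)) = (\<Sum>v\<in>V. \<Sum>e\<in>{e\<in>E. v \<in> e}. 1)"
    unfolding hdeg_def by simp
  also have "\<dots> = (\<Sum>e\<in>E. \<Sum>v\<in>e. 1)" by (rule sum_vertex_edge_swap[OF assms(1)])
  also have "\<dots> = real c * real (card E)" using assms(2) unfolding uniform_def by simp
  finally show ?thesis .
qed

lemma sum_edge_inner_colour_class_tests:
  assumes hg: "hypergraph V E" and unif: "uniform c E" and col: "proper_strong_coloring V E k col"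
  shows "(\<Sum>j\<in>{1..k}. edge_inner E (colour_class_test k col j) (colour_class_test k col j))
    = real (card E) * real c * real k * (real k - real c)"
proof -
  have "(\<Sum>j\<in>{1..k}. (real k * of_bool (j \<in> col ` e) - real c)\<^sup>2)
      = real c * real k * (real k - real c)" if e: "e \<in> E" for e
  proof -
    have "(\<Sum>j\<in>{1..k}. (real k * of_bool (j \<in> col ` e) - real c)\<^sup>2)
        = (\<Sum>j\<in>{1..k}. ((real k)\<^sup>2 - 2 * real k * real c) * of_bool (j \<in> col ` e) + (real c)\<^sup>2)"
      by (intro sum.cong) (auto simp: power2_eq_square algebra_simps)
    also have "\<dots> = ((real k)\<^sup>2 - 2 * real k * real c) * real (card (col ` e)) + real k * (real c)\<^sup>2"
      using proper_strong_coloring_edge_colours(1)[OF hg unif col e]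
      by (simp add: sum.distrib sum_distrib_left[symmetric] Int_absorb1)
    also have "\<dots> = real c * real k * (real k - real c)"
      unfolding proper_strong_coloring_edge_colours(2)[OF hg unif col e]
      by (simp add: power2_eq_square algebra_simps)
    finally show ?thesis .
  qed
  then have "(\<Sum>j\<in>{1..k}. edge_inner E (colour_class_test k col j) (colour_class_test k col j))
      = (\<Sum>e\<in>E. real c * real k * (real k - real c))"
    unfolding edge_inner_def
    by (subst sum.swap) (simp add: edge_sum_colour_class_test[OF hg unif col] power2_eq_square[symmetric])
  then show ?thesis by simp
qed

lemma sum_deg_inner_colour_class_tests:
  assumes hg: "hypergraph V E" and unif: "uniform c E" and col: "proper_strong_coloring V E k col"
  shows "(\<Sum>j\<in>{1..k}. deg_inner V E (colour_class_test k col j) (colour_class_test k col j))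
    = real c * real (card E) * real k * (real k - 1)"
proof -
  have "(\<Sum>j\<in>{1..k}. colour_class_test k col j x * colour_class_test k col j x)
      = real k * (real k - 1)" if "x \<in> V" for x
  proof -
    have "col x \<in> {1..k}" using col that unfolding proper_strong_coloring_def by blast
    have "(\<Sum>j\<in>{1..k}. colour_class_test k col j x * colour_class_test k col j x)
        = (\<Sum>j\<in>{1..k}. 1 + (if j = col x then (real k - 1)\<^sup>2 - 1 else 0))"
      unfolding colour_class_test_def by (intro sum.cong) (auto simp: power2_eq_square)
    also have "\<dots> = real k + ((real k - 1)\<^sup>2 - 1)"
      using \<open>col x \<in> {1..k}\<close> by (simp add: sum.distrib)
    also have "\<dots> = real k * (real k - 1)" by (simp add: power2_eq_square algebra_simps)
    finally show ?thesis .
  qed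
  note squares = this
  have "(\<Sum>j\<in>{1..k}. deg_inner V E (colour_class_test k col j) (colour_class_test k col j))
      = (\<Sum>x\<in>V. real (hdeg E x) * (\<Sum>j\<in>{1..k}. colour_class_test k col j x * colour_class_test k col j x))"
    unfolding deg_inner_def by (subst sum.swap) (simp add: sum_distrib_left mult.assoc)
  also have "\<dots> = (\<Sum>x\<in>V. real (hdeg E x)) * (real k * (real k - 1))"
    using squares by (simp add: sum_distrib_right)
  finally show ?thesis using sum_hdeg_uniform[OF hg unif] by simp
qed

lemma colour_class_tests_minimize:
  assumes hg: "hypergraph V E" and unif: "uniform c E" and col: "proper_strong_coloring V E k col"
    and bound: "\<And>f. edge_inner E f f \<ge> l * deg_inner V E f f"
    and l: "l * (real k - 1) = real k - real c"
    and j: "j \<in> {1..k}"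
  shows "edge_inner E (colour_class_test k col j) (colour_class_test k col j)
    = l * deg_inner V E (colour_class_test k col j) (colour_class_test k col j)"
proof -
  let ?gap = "\<lambda>j. edge_inner E (colour_class_test k col j) (colour_class_test k col j)
    - l * deg_inner V E (colour_class_test k col j) (colour_class_test k col j)"
  have "(\<Sum>j\<in>{1..k}. ?gap j)
      = (\<Sum>j\<in>{1..k}. edge_inner E (colour_class_test k col j) (colour_class_test k col j))
        - l * (\<Sum>j\<in>{1..k}. deg_inner V E (colour_class_test k col j) (colour_class_test k col j))"
    by (simp add: sum_subtractf sum_distrib_left)
  also have "\<dots> = real (card E) * real c * real k * ((real k - real c) - l * (real k - 1))"
    unfolding sum_edge_inner_colour_class_tests[OF hg unif col] sum_deg_inner_colour_class_tests[OF hg unif col]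
    by (simp add: algebra_simps)
  also have "\<dots> = 0" using l by simp
  finally have "(\<Sum>j\<in>{1..k}. ?gap j) = 0" .
  moreover have "\<forall>j\<in>{1..k}. ?gap j \<ge> 0" using bound by simp
  ultimately have "?gap j = 0" using sum_nonneg_eq_0_iff[of "{1..k}" ?gap] j by simp
  then show ?thesis by simp
qed

lemma colour_class_vertex_balance:
  assumes hg: "hypergraph V E" and unif: "uniform c E" and col: "proper_strong_coloring V E k col"
    and bound: "\<And>f. edge_inner E f f \<ge> l * deg_inner V E f f"
    and l: "l * (real k - 1) = real k - real c"
    and v: "v \<in> V" and i: "i \<in> {1..k}"
  shows "real k * real (card {e\<in>E. v \<in> e \<and> i \<in> col ` e}) - real c * real (hdeg E v)
    = l * real (hdeg E v) * colour_class_test k col i v"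
proof -
  have "(\<Sum>e\<in>{e\<in>E. v \<in> e}. edge_sum (colour_class_test k col i) e)
      = real k * real (card {e\<in>E. v \<in> e \<and> i \<in> col ` e}) - real c * real (hdeg E v)"
    using hypergraph_finite(1)[OF hg]
    by (simp add: edge_sum_colour_class_test[OF hg unif col] sum_subtractf sum_distrib_left[symmetric]
        hdeg_def Int_def conj_ac)
  then show ?thesis
    using rayleigh_minimizer_vertex_equation[OF hg v bound colour_class_tests_minimize[OF hg unif col bound l i]]
    by simp
qed

lemma colour_class_edge_count:
  assumes hg: "hypergraph V E" and unif: "uniform c E" and col: "proper_strong_coloring V E k col"
    and bound: "\<And>f. edge_inner E f f \<ge> l * deg_inner V E f f"
    and l: "l * (real k - 1) = real k - real c"
    and v: "v \<in> V" and i: "i \<in> {1..k}"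
  shows "real (card {e\<in>E. v \<in> e \<and> e \<inter> {u\<in>V. col u = i} \<noteq> {}})
    = (if v \<notin> {u\<in>V. col u = i} then (real c - 1) * real (hdeg E v) / (real k - 1)
       else real (hdeg E v))"
proof -
  define N where "N = card {e\<in>E. v \<in> e \<and> i \<in> col ` e}"
  have N_eq: "{e\<in>E. v \<in> e \<and> e \<inter> {u\<in>V. col u = i} \<noteq> {}} = {e\<in>E. v \<in> e \<and> i \<in> col ` e}"
    using hg unfolding hypergraph_def by blast
  note balance = colour_class_vertex_balance[OF assms, folded N_def]
  show ?thesis
  proof (cases "col v = i")
    case True
    then have "{e\<in>E. v \<in> e \<and> i \<in> col ` e} = {e\<in>E. v \<in> e}" by auto
    then show ?thesis using True v N_eq unfolding hdeg_def by simp
  next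
    case False
    have "k \<ge> 2" using False i col v unfolding proper_strong_coloring_def by fastforce
    have "real k * real N = real (hdeg E v) * (real c - l)"
      using balance False unfolding colour_class_test_def by (simp add: algebra_simps)
    then have "real k * real N * (real k - 1) = real (hdeg E v) * (real c - l) * (real k - 1)"
      by simp
    also have "\<dots> = real (hdeg E v) * (real c * (real k - 1) - l * (real k - 1))"
      by (simp add: algebra_simps)
    also have "\<dots> = real k * (real (hdeg E v) * (real c - 1))" unfolding l by (simp add: algebra_simps)
    finally have "real N * (real k - 1) = real (hdeg E v) * (real c - 1)" using \<open>k \<ge> 2\<close> by simp
    then show ?thesis using False v N_eq \<open>k \<ge> 2\<close> unfolding N_def by (simp add: field_simps)
  qed
qed

theorem mainTheorem10:
  fixes V :: "'a set" and E :: "'a set set" and c :: nat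
  assumes "c \<ge> 2"
    and "hypergraph V E"
    and "uniform c E"
    and "E \<noteq> {}"
    and "\<forall>v\<in>V. hdeg E v \<ge> 1"
    and "real (strong_chromatic V E)
           = (real c - lambda_min V E) / (1 - lambda_min V E)"
  shows "\<forall>col. proper_strong_coloring V E (strong_chromatic V E) col \<longrightarrow>
           (\<forall>v\<in>V. \<forall>i\<in>{1..strong_chromatic V E}.
              real (card {e\<in>E. v \<in> e \<and> e \<inter> {u\<in>V. col u = i} \<noteq> {}})
              = (if v \<notin> {u\<in>V. col u = i}
                 then (real c - 1) * real (hdeg E v) / (real (strong_chromatic V E) - 1)
                 else real (hdeg E v)))"
proof -
  obtain e where e: "e \<in> E" using \<open>E \<noteq> {}\<close> by blast
  have "card e = c" "e \<subseteq> V" using e assms(2,3) unfolding hypergraph_def uniform_def by auto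
  then have "V \<noteq> {}" using \<open>c \<ge> 2\<close> by auto
  note bound = lambda_min_rayleigh_lower_bound[OF assms(2,5) this]
  have lambda_eq: "lambda_min V E * (real (strong_chromatic V E) - 1) = real (strong_chromatic V E) - real c"
    if col: "proper_strong_coloring V E (strong_chromatic V E) col" for col
  proof -
    have "c \<le> strong_chromatic V E" by (rule uniform_le_colours[OF assms(2,3) col e])
    \<comment> \<open>For lambda_min = 1 the hypothesis would say chi = 0, as division by zero yields 0.\<close>
    then have "lambda_min V E \<noteq> 1" using assms(1,6) by auto
    then show ?thesis using assms(6) by (simp add: field_simps)
  qed
  show ?thesis using colour_class_edge_count[OF assms(2,3) _ bound lambda_eq] by blast
qed

end
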